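(* Let $\chi\in C_0^\infty(\mathbb R)$ be even, supported in $(-2,2)$ and equal to $1$ on $[-1,1]$, let $\varphi_1(x,\xi)=x\xi+|\xi|$, $\varphi_2(x,\eta)=x\eta$, and define on $\mathbb R$ $$T(f,g)(x)=\iint\chi(x)\widehat f(\xi)\widehat g(\eta)e^{i\varphi_1(x,\xi)+i\varphi_2(x,\eta)}\frac{d\xi\,d\eta}{(2\pi)^2}.$$ Then for every $1<p<\infty$, $T$ is not bounded from $L^\infty(\mathbb R)\times L^p(\mathbb R)$ to $L^p(\mathbb R)$.
   Context: $\widehat f(\xi)=\int f(x)e^{-ix\xi}dx$. The amplitude $\sigma(x,\xi,\eta)=\chi(x)$ belongs to $S^0_{1,0}(1,2)$. *)

theory Defs
  imports "HOL-Analysis.Analysis"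
begin

fun cderiv :: "nat \<Rightarrow> (real \<Rightarrow> complex) \<Rightarrow> real \<Rightarrow> complex" where
  "cderiv 0 f = f"
| "cderiv (Suc n) f = (\<lambda>x. vector_derivative (cderiv n f) (at x))"

definition schwartz :: "(real \<Rightarrow> complex) \<Rightarrow> bool" where
  "schwartz f \<longleftrightarrow> (\<forall>n x. cderiv n f differentiable (at x)) \<and>
     (\<forall>n k. \<exists>B. \<forall>x. \<bar>x\<bar> ^ k * norm (cderiv n f x) \<le> B)"

definition smooth_real :: "(real \<Rightarrow> real) \<Rightarrow> bool" where
  "smooth_real h \<longleftrightarrow> (\<forall>n x. ((deriv ^^ n) h) differentiable (at x))"

definition fourier :: "(real \<Rightarrow> complex) \<Rightarrow> real \<Rightarrow> complex" where
  "fourier f \<xi> = (LINT x|lborel. f x * cis (- x * \<xi>))"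

definition Lp_norm :: "real \<Rightarrow> (real \<Rightarrow> complex) \<Rightarrow> real" where
  "Lp_norm p h = (LINT x|lborel. norm (h x) powr p) powr (1 / p)"

definition sup_norm :: "(real \<Rightarrow> complex) \<Rightarrow> real" where
  "sup_norm h = (SUP x. norm (h x))"

definition T_op :: "(real \<Rightarrow> real) \<Rightarrow> (real \<Rightarrow> complex) \<Rightarrow> (real \<Rightarrow> complex) \<Rightarrow> real \<Rightarrow> complex" where
  "T_op chi f g x = (LINT \<xi>|lborel. LINT \<eta>|lborel.
      complex_of_real (chi x) * fourier f \<xi> * fourier g \<eta>
      * cis ((x * \<xi> + \<bar>\<xi>\<bar>) + x * \<eta>) / (2 * pi)\<^sup>2)"

end

theory Submission
  imports Defs "HOL-Probability.Probability" "HOL-Computational_Algebra.Polynomial"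
begin

text \<open>For a Gaussian \<open>g\<close> the \<open>\<eta>\<close>-integral in \<open>T_op\<close> is a Fourier inversion, so \<open>T(f, g)\<close>
  is \<open>g\<close> multiplied by \<open>chi x * F x / (2 * pi)\<close>, where \<open>F x\<close> is the \<open>\<xi>\<close>-integral of
  \<open>fourier f \<xi> * cis (x * \<xi> + \<bar>\<xi>\<bar>)\<close>. Take for \<open>f\<close> a sum of \<open>N\<close> wave packets at the
  scales \<open>1 / 2 ^ (k + 1)\<close>: their moduli telescope, so \<open>sup_norm f \<le> 1\<close>, while the Fourier
  transform of each packet, a difference of two Gaussians of equal mass, puts a fixed amount of
  mass on \<open>\<xi> > 0\<close>. At \<open>x = -1\<close> the phase vanishes on \<open>\<xi> > 0\<close>, and on \<open>\<xi> < 0\<close> integration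
  by parts shows that the \<open>k\<close>-th packet contributes only \<open>O(1 / 2 ^ k)\<close>; hence \<open>\<bar>F (-1)\<bar>\<close>
  grows linearly in \<open>N\<close>. A narrow Gaussian \<open>g\<close> near \<open>-1\<close>, where \<open>chi = 1\<close> and
  \<open>\<bar>F\<bar> \<ge> \<bar>F (-1)\<bar> / 2\<close>, then has \<open>Lp_norm p (T_op chi f g)\<close> of order \<open>\<bar>F (-1)\<bar> * Lp_norm p g\<close>.\<close>

definition gaussian :: "real \<Rightarrow> real \<Rightarrow> real \<Rightarrow> real" where
  "gaussian c s y = exp (- (y - c)\<^sup>2 / (2 * s\<^sup>2))"

definition gauss_hat :: "real \<Rightarrow> real \<Rightarrow> real" where
  "gauss_hat s \<xi> = s * sqrt (2*pi) * exp (- s\<^sup>2 * \<xi>\<^sup>2 / 2)"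

lemma fourier_std_gaussian:
  "(LINT x|lborel. complex_of_real (exp (- x\<^sup>2 / 2)) * cis (t * x)) = complex_of_real (sqrt (2*pi) * exp (- t\<^sup>2 / 2))"
proof -
  have density: "std_normal_density x *\<^sub>R iexp (t * x) = complex_of_real (exp (- x\<^sup>2 / 2)) * cis (t * x) / complex_of_real (sqrt (2*pi))" for x
    by (simp add: std_normal_density_def cis_conv_exp scaleR_conv_of_real)
  have "char std_normal_distribution t = (LINT x|lborel. std_normal_density x *\<^sub>R iexp (t * x))"
    unfolding char_def by (subst integral_density) (auto simp: normal_density_nonneg)
  also have "\<dots> = (LINT x|lborel. complex_of_real (exp (- x\<^sup>2 / 2)) * cis (t * x)) / complex_of_real (sqrt (2*pi))"
    unfolding density by (rule integral_divide_zero)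
  finally have "(LINT x|lborel. complex_of_real (exp (- x\<^sup>2 / 2)) * cis (t * x)) = complex_of_real (sqrt (2*pi)) * char std_normal_distribution t"
    by (simp add: field_simps)
  then show ?thesis using char_std_normal_distribution by simp
qed

lemma integrable_std_gaussian: "integrable lborel (\<lambda>x::real. exp (- x\<^sup>2 / 2))"
proof -
  have "integrable lborel (\<lambda>x. sqrt (2*pi) * (std_normal_density x * x^0))"
    using integrable_std_normal_moment[of 0] by (rule integrable_mult_right)
  then show ?thesis by (simp add: std_normal_density_def)
qed

lemma integrable_gaussian:
  assumes "s > 0" shows "integrable lborel (gaussian c s)"
proof -
  have "integrable lborel (\<lambda>x. exp (- ((x - c) / s)\<^sup>2 / 2))"
    using lborel_integrable_real_affine[OF integrable_std_gaussian, of "1/s" "- c/s"] assms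
    by (simp add: diff_divide_distrib add.commute)
  then show ?thesis using assms by (simp add: gaussian_def[abs_def] power_divide mult.commute)
qed

lemma integrable_gaussian_cis:
  assumes "s > 0"
  shows "integrable lborel (\<lambda>y. complex_of_real (gaussian c s y) * cis (- y * \<xi>))"
  using assms by (intro Bochner_Integration.integrable_bound[OF integrable_gaussian[OF assms, of c]])
    (auto simp: norm_mult gaussian_def intro!: borel_measurable_continuous_onI continuous_intros)

lemma fourier_gaussian:
  assumes s: "s > 0"
  shows "fourier (\<lambda>y. complex_of_real (gaussian c s y)) \<xi> = complex_of_real (gauss_hat s \<xi>) * cis (- c * \<xi>)"
proof -
  have "fourier (\<lambda>y. complex_of_real (gaussian c s y)) \<xi>
      = \<bar>s\<bar> *\<^sub>R (LINT x|lborel. complex_of_real (gaussian c s (c + s * x)) * cis (- (c + s * x) * \<xi>))"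
    unfolding fourier_def using s by (intro lborel_integral_real_affine) simp
  also have "(\<lambda>x. complex_of_real (gaussian c s (c + s * x)) * cis (- (c + s * x) * \<xi>))
      = (\<lambda>x. cis (- c * \<xi>) * (complex_of_real (exp (- x\<^sup>2 / 2)) * cis ((- s * \<xi>) * x)))"
  proof
    fix x
    have "gaussian c s (c + s * x) = exp (- x\<^sup>2 / 2)"
      using s by (simp add: gaussian_def power_mult_distrib)
    moreover have "cis (- (c + s * x) * \<xi>) = cis (- c * \<xi>) * cis ((- s * \<xi>) * x)"
      by (simp add: cis_mult algebra_simps)
    ultimately show "complex_of_real (gaussian c s (c + s * x)) * cis (- (c + s * x) * \<xi>)
      = cis (- c * \<xi>) * (complex_of_real (exp (- x\<^sup>2 / 2)) * cis ((- s * \<xi>) * x))"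
      by simp
  qed
  also have "(LINT x|lborel. cis (- c * \<xi>) * (complex_of_real (exp (- x\<^sup>2 / 2)) * cis ((- s * \<xi>) * x)))
      = cis (- c * \<xi>) * complex_of_real (sqrt (2*pi) * exp (- (- s * \<xi>)\<^sup>2 / 2))"
    by (simp only: integral_mult_right_zero fourier_std_gaussian)
  finally show ?thesis
    using s by (simp add: gauss_hat_def scaleR_conv_of_real power_mult_distrib mult_ac)
qed

lemma integral_gaussian:
  assumes "s > 0" shows "(LINT y|lborel. gaussian c s y) = s * sqrt (2*pi)"
  using fourier_gaussian[OF assms, of c 0] integral_complex_of_real[of lborel "gaussian c s"]
  by (simp add: fourier_def gauss_hat_def) (metis of_real_eq_iff of_real_mult)

lemma gauss_hat_eq_gaussian: "\<sigma> > 0 \<Longrightarrow> gauss_hat \<sigma> u = \<sigma> * sqrt (2*pi) * gaussian 0 (1/\<sigma>) u"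
  by (simp add: gauss_hat_def gaussian_def power_divide power_mult_distrib field_simps)

lemma integrable_gauss_hat: "\<sigma> > 0 \<Longrightarrow> integrable lborel (\<lambda>x. gauss_hat \<sigma> (x - c))"
  using lborel_integrable_real_affine[OF integrable_gaussian[of "1/\<sigma>" 0], of 1 "- c"]
  by (simp add: gauss_hat_eq_gaussian)

lemma integral_gauss_hat: assumes "\<sigma> > 0" shows "(LINT x|lborel. gauss_hat \<sigma> (x - c)) = 2 * pi"
proof -
  have "(LINT x|lborel. gauss_hat \<sigma> (x - c)) = \<sigma> * sqrt (2*pi) * (LINT x|lborel. gaussian c (1/\<sigma>) x)"
    using assms by (simp add: gauss_hat_eq_gaussian gaussian_def)
  then show ?thesis using assms by (simp add: integral_gaussian)
qed

lemma power_le_exp: fixes t :: real assumes "t \<ge> 0" shows "t ^ n \<le> real n ^ n * exp t"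
proof (cases "n = 0")
  case True then show ?thesis using assms by simp
next
  case False
  then have n: "real n > 0" by simp
  have "t / n \<le> exp (t / n)" using exp_ge_add_one_self[of "t/n"] by linarith
  then have "(t / n) ^ n \<le> exp (t / n) ^ n" using assms n by (intro power_mono) auto
  also have "\<dots> = exp t" using n by (simp add: exp_of_nat_mult[symmetric])
  finally have "t ^ n / real n ^ n \<le> exp t" by (simp add: power_divide)
  then show ?thesis using n by (simp add: field_simps)
qed

lemma abs_power_le_one_plus_square_power: "\<bar>y::real\<bar> ^ m \<le> 1 + (y\<^sup>2) ^ m"
proof (cases "\<bar>y\<bar> \<le> 1")
  case True
  then have "\<bar>y\<bar> ^ m \<le> 1" by (simp add: power_le_one)
  then show ?thesis by (simp add: add_increasing2)
next
  case False
  then have "1 \<le> \<bar>y\<bar> ^ m" by (simp add: one_le_power)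
  then have "\<bar>y\<bar> ^ m \<le> (\<bar>y\<bar> ^ m) ^ 2"
    unfolding power2_eq_square using mult_left_mono[of 1 "\<bar>y\<bar> ^ m" "\<bar>y\<bar> ^ m"] by simp
  also have "\<dots> = (y\<^sup>2) ^ m"
    by (simp add: power_mult_distrib[symmetric] power_mult[symmetric] mult.commute power_even_abs)
  finally show ?thesis by simp
qed

lemma gaussian_moment_bounded:
  fixes a c :: real assumes a: "a > 0"
  shows "\<exists>B. \<forall>y::real. \<bar>y\<bar> ^ m * exp (- a * y\<^sup>2 + c * y) \<le> B"
proof -
  define B where "B = exp (c\<^sup>2 / (2 * a)) * (1 + (2 / a) ^ m * real m ^ m)"
  have "\<bar>y\<bar> ^ m * exp (- a * y\<^sup>2 + c * y) \<le> B" for y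
  proof -
    define t where "t = a * y\<^sup>2 / 2"
    have t0: "t \<ge> 0" using a by (simp add: t_def)
    have "0 \<le> (a * y - c)\<^sup>2 / (2 * a)" using a by simp
    then have completed_square: "- a * y\<^sup>2 + c * y \<le> c\<^sup>2 / (2 * a) - t"
      using a by (simp add: t_def field_simps power2_eq_square)
    have "\<bar>y\<bar> ^ m \<le> 1 + (2 / a) ^ m * t ^ m"
      using abs_power_le_one_plus_square_power[of y m] a by (simp add: t_def power_mult_distrib[symmetric])
    also have "\<dots> \<le> 1 + (2 / a) ^ m * (real m ^ m * exp t)"
      using a power_le_exp[OF t0, of m] by (intro add_left_mono mult_left_mono) auto
    finally have moment: "\<bar>y\<bar> ^ m \<le> 1 + (2 / a) ^ m * (real m ^ m * exp t)" .
    have "\<bar>y\<bar> ^ m * exp (- a * y\<^sup>2 + c * y) \<le> \<bar>y\<bar> ^ m * (exp (c\<^sup>2 / (2 * a)) * exp (- t))"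
      using completed_square by (intro mult_left_mono) (auto simp: exp_add[symmetric])
    also have "\<dots> \<le> (1 + (2 / a) ^ m * (real m ^ m * exp t)) * (exp (c\<^sup>2 / (2 * a)) * exp (- t))"
      by (intro mult_right_mono moment) auto
    also have "\<dots> = exp (c\<^sup>2 / (2 * a)) * (exp (- t) + (2 / a) ^ m * real m ^ m)"
      by (simp add: algebra_simps exp_minus field_simps)
    also have "\<dots> \<le> B" unfolding B_def using t0 by (intro mult_left_mono) auto
    finally show ?thesis .
  qed
  then show ?thesis by blast
qed

text \<open>Derivatives of a Gaussian are polynomial multiples of it, so this family is closed under
  differentiation and the Schwartz bounds reduce to moment bounds of a single Gaussian.\<close>

definition poly_gaussian :: "complex poly \<Rightarrow> real \<Rightarrow> real \<Rightarrow> real \<Rightarrow> complex \<Rightarrow> complex" where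
  "poly_gaussian P a c b z = poly P z * exp (- of_real a * z\<^sup>2 + (of_real c + \<i> * of_real b) * z)"

definition poly_gaussian_deriv_poly :: "real \<Rightarrow> real \<Rightarrow> real \<Rightarrow> complex poly \<Rightarrow> complex poly" where
  "poly_gaussian_deriv_poly a c b P = pderiv P + P * [:of_real c + \<i> * of_real b, - 2 * of_real a:]"

lemma poly_gaussian_has_field_derivative:
  "(poly_gaussian P a c b has_field_derivative poly_gaussian (poly_gaussian_deriv_poly a c b P) a c b z) (at z)"
  unfolding poly_gaussian_def poly_gaussian_deriv_poly_def
  by (auto intro!: derivative_eq_intros poly_DERIV simp: algebra_simps power2_eq_square)

lemma poly_gaussian_real_has_vector_derivative:
  "((\<lambda>y. poly_gaussian P a c b (of_real y)) has_vector_derivative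
     poly_gaussian (poly_gaussian_deriv_poly a c b P) a c b (of_real x)) (at x)"
  by (rule has_vector_derivative_real_field[OF poly_gaussian_has_field_derivative])

lemma cderiv_poly_gaussian:
  "cderiv n (\<lambda>y. poly_gaussian P a c b (of_real y))
     = (\<lambda>y. poly_gaussian ((poly_gaussian_deriv_poly a c b ^^ n) P) a c b (of_real y))"
  by (induction n) (simp_all add: vector_derivative_at[OF poly_gaussian_real_has_vector_derivative])

lemma norm_poly_of_real_le:
  "norm (poly P (of_real y :: complex)) \<le> (\<Sum>i\<le>degree P. norm (coeff P i) * \<bar>y\<bar> ^ i)"
proof -
  have "norm (poly P (of_real y :: complex)) = norm (\<Sum>i\<le>degree P. coeff P i * of_real y ^ i)"
    by (simp add: poly_altdef)
  also have "\<dots> \<le> (\<Sum>i\<le>degree P. norm (coeff P i * of_real y ^ i))" by (rule norm_sum)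
  also have "\<dots> = (\<Sum>i\<le>degree P. norm (coeff P i) * \<bar>y\<bar> ^ i)" by (simp add: norm_mult norm_power)
  finally show ?thesis .
qed

lemma poly_gaussian_moment_bounded:
  assumes a: "a > 0"
  shows "\<exists>B. \<forall>y. \<bar>y\<bar> ^ k * norm (poly_gaussian P a c b (of_real y)) \<le> B"
proof -
  have "\<forall>i. \<exists>B. \<forall>y::real. \<bar>y\<bar> ^ (k + i) * exp (- a * y\<^sup>2 + c * y) \<le> B"
    using gaussian_moment_bounded[OF a] by blast
  then obtain B where B: "\<And>i y. \<bar>y\<bar> ^ (k + i) * exp (- a * y\<^sup>2 + c * y) \<le> B i"
    by metis
  have "\<bar>y\<bar> ^ k * norm (poly_gaussian P a c b (of_real y)) \<le> (\<Sum>i\<le>degree P. norm (coeff P i) * B i)" for y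
  proof -
    have "norm (poly_gaussian P a c b (of_real y)) = norm (poly P (of_real y)) * exp (- a * y\<^sup>2 + c * y)"
      unfolding poly_gaussian_def by (simp add: norm_mult norm_exp_eq_Re)
    then have "\<bar>y\<bar> ^ k * norm (poly_gaussian P a c b (of_real y))
        \<le> \<bar>y\<bar> ^ k * ((\<Sum>i\<le>degree P. norm (coeff P i) * \<bar>y\<bar> ^ i) * exp (- a * y\<^sup>2 + c * y))"
      by (auto intro!: mult_left_mono mult_right_mono norm_poly_of_real_le)
    also have "\<dots> = (\<Sum>i\<le>degree P. norm (coeff P i) * (\<bar>y\<bar> ^ (k + i) * exp (- a * y\<^sup>2 + c * y)))"
      by (simp add: sum_distrib_left sum_distrib_right power_add mult_ac)
    also have "\<dots> \<le> (\<Sum>i\<le>degree P. norm (coeff P i) * B i)"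
      by (intro sum_mono mult_left_mono B) auto
    finally show ?thesis .
  qed
  then show ?thesis by blast
qed

lemma schwartz_poly_gaussian:
  assumes "a > 0" shows "schwartz (\<lambda>y. poly_gaussian P a c b (of_real y))"
  unfolding schwartz_def cderiv_poly_gaussian
  using poly_gaussian_real_has_vector_derivative poly_gaussian_moment_bounded[OF assms]
  by (blast intro: differentiableI_vector)

lemma schwartz_exp_quadratic_cis:
  assumes "a > 0" shows "schwartz (\<lambda>y. complex_of_real (exp (- a * y\<^sup>2 + c * y)) * cis (b * y))"
proof -
  have "poly_gaussian 1 a c b (of_real y) = complex_of_real (exp (- a * y\<^sup>2 + c * y)) * cis (b * y)" for y
  proof -
    have "- of_real a * (of_real y)\<^sup>2 + (of_real c + \<i> * of_real b) * of_real y
        = complex_of_real (- a * y\<^sup>2 + c * y) + \<i> * complex_of_real (b * y)"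
      by (simp add: algebra_simps)
    then show ?thesis
      unfolding poly_gaussian_def poly_1 mult_1 by (simp only: exp_add exp_of_real cis_conv_exp)
  qed
  then show ?thesis using schwartz_poly_gaussian[OF assms, of 1 c b] by simp
qed

lemma cderiv_add:
  assumes "\<And>n x. cderiv n f differentiable at x" "\<And>n x. cderiv n g differentiable at x"
  shows "cderiv n (\<lambda>x. f x + g x) = (\<lambda>x. cderiv n f x + cderiv n g x)"
  by (induction n) (simp_all add: assms)

lemma cderiv_cmult:
  assumes "\<And>n x. cderiv n f differentiable at x"
  shows "cderiv n (\<lambda>x. c * f x) = (\<lambda>x. c * cderiv n f x)"
  by (induction n) (simp_all add: assms)

lemma schwartz_add: assumes "schwartz f" "schwartz g" shows "schwartz (\<lambda>x. f x + g x)"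
proof -
  have df: "\<And>n x. cderiv n f differentiable at x" and dg: "\<And>n x. cderiv n g differentiable at x"
    using assms by (auto simp: schwartz_def)
  show ?thesis unfolding schwartz_def cderiv_add[OF df dg]
  proof (intro conjI allI)
    fix n x show "(\<lambda>x. cderiv n f x + cderiv n g x) differentiable at x" using df dg by auto
  next
    fix n k
    obtain B1 where B1: "\<forall>x. \<bar>x\<bar> ^ k * norm (cderiv n f x) \<le> B1" using assms unfolding schwartz_def by blast
    obtain B2 where B2: "\<forall>x. \<bar>x\<bar> ^ k * norm (cderiv n g x) \<le> B2" using assms unfolding schwartz_def by blast
    have "\<bar>x\<bar> ^ k * norm (cderiv n f x + cderiv n g x) \<le> B1 + B2" for x
    proof -
      have "\<bar>x\<bar> ^ k * norm (cderiv n f x + cderiv n g x) \<le> \<bar>x\<bar> ^ k * (norm (cderiv n f x) + norm (cderiv n g x))"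
        by (intro mult_left_mono norm_triangle_ineq) auto
      then show ?thesis using B1 B2 by (simp add: algebra_simps) (smt (verit))
    qed
    then show "\<exists>B. \<forall>x. \<bar>x\<bar> ^ k * norm (cderiv n f x + cderiv n g x) \<le> B" by blast
  qed
qed

lemma schwartz_cmult: assumes "schwartz f" shows "schwartz (\<lambda>x. c * f x)"
proof -
  have df: "\<And>n x. cderiv n f differentiable at x" using assms by (auto simp: schwartz_def)
  show ?thesis unfolding schwartz_def cderiv_cmult[OF df]
  proof (intro conjI allI)
    fix n x show "(\<lambda>x. c * cderiv n f x) differentiable at x" using df by auto
  next
    fix n k
    obtain B where B: "\<forall>x. \<bar>x\<bar> ^ k * norm (cderiv n f x) \<le> B" using assms unfolding schwartz_def by blast
    have "\<bar>x\<bar> ^ k * norm (c * cderiv n f x) \<le> norm c * B" for x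
      using mult_left_mono[OF spec[OF B, of x], of "norm c"] by (simp add: norm_mult mult_ac)
    then show "\<exists>B. \<forall>x. \<bar>x\<bar> ^ k * norm (c * cderiv n f x) \<le> B" by blast
  qed
qed

lemma schwartz_diff: "schwartz f \<Longrightarrow> schwartz g \<Longrightarrow> schwartz (\<lambda>x. f x - g x)"
  using schwartz_add[of f "\<lambda>x. (- 1) * g x"] schwartz_cmult[of g "- 1"] by simp

lemma schwartz_zero: "schwartz (\<lambda>x. 0)"
  using schwartz_cmult[OF schwartz_exp_quadratic_cis[of 1 0 0], of 0] by simp

lemma schwartz_sum: "finite A \<Longrightarrow> (\<And>k. k \<in> A \<Longrightarrow> schwartz (f k)) \<Longrightarrow> schwartz (\<lambda>x. \<Sum>k\<in>A. f k x)"
  by (induction A rule: finite_induct) (auto intro: schwartz_add schwartz_zero)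

lemma schwartz_gaussian_cis:
  assumes s: "s > 0" shows "schwartz (\<lambda>y. complex_of_real (gaussian c s y) * cis (b * y))"
proof -
  have "gaussian c s y = exp (- c\<^sup>2 / (2 * s\<^sup>2)) * exp (- (1 / (2 * s\<^sup>2)) * y\<^sup>2 + (c / s\<^sup>2) * y)" for y
  proof -
    have "- (y - c)\<^sup>2 / (2 * s\<^sup>2) = - c\<^sup>2 / (2 * s\<^sup>2) + (- (1 / (2 * s\<^sup>2)) * y\<^sup>2 + (c / s\<^sup>2) * y)"
      using s by (simp add: field_simps power2_eq_square)
    then show ?thesis unfolding gaussian_def exp_add[symmetric] by simp
  qed
  moreover have "schwartz (\<lambda>y. complex_of_real (exp (- (1 / (2 * s\<^sup>2)) * y\<^sup>2 + (c / s\<^sup>2) * y)) * cis (b * y))"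
    using s by (intro schwartz_exp_quadratic_cis) simp
  ultimately show ?thesis
    using schwartz_cmult[of _ "complex_of_real (exp (- c\<^sup>2 / (2 * s\<^sup>2)))"] by (simp add: mult.assoc)
qed

definition wave_packet :: "real \<Rightarrow> real \<Rightarrow> complex" where
  "wave_packet s y = complex_of_real (gaussian 0 (2 * s) y - gaussian 0 s y) * cis (y / s)"

definition wave_packet_hat :: "real \<Rightarrow> real \<Rightarrow> real" where
  "wave_packet_hat s \<xi> = gauss_hat (2 * s) (\<xi> - 1/s) - gauss_hat s (\<xi> - 1/s)"

lemma wave_packet_times_cis:
  "wave_packet s y * cis (- y * \<xi>) = complex_of_real (gaussian 0 (2 * s) y) * cis (- y * (\<xi> - 1/s))
     - complex_of_real (gaussian 0 s y) * cis (- y * (\<xi> - 1/s))"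
proof -
  have "cis (y / s) * cis (- y * \<xi>) = cis (- y * (\<xi> - 1/s))" unfolding cis_mult by (simp add: algebra_simps)
  then show ?thesis unfolding wave_packet_def mult.assoc by (simp add: algebra_simps)
qed

lemma integrable_wave_packet_cis:
  assumes "s > 0" shows "integrable lborel (\<lambda>y. wave_packet s y * cis (- y * \<xi>))"
  unfolding wave_packet_times_cis using assms
  by (intro Bochner_Integration.integrable_diff integrable_gaussian_cis) auto

lemma fourier_wave_packet:
  assumes s: "s > 0" shows "fourier (wave_packet s) \<xi> = complex_of_real (wave_packet_hat s \<xi>)"
proof -
  have "fourier (wave_packet s) \<xi>
      = fourier (\<lambda>y. complex_of_real (gaussian 0 (2 * s) y)) (\<xi> - 1/s)
        - fourier (\<lambda>y. complex_of_real (gaussian 0 s y)) (\<xi> - 1/s)"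
    unfolding fourier_def wave_packet_times_cis
    using s by (intro Bochner_Integration.integral_diff integrable_gaussian_cis) auto
  then show ?thesis using s by (simp add: fourier_gaussian wave_packet_hat_def)
qed

lemma schwartz_wave_packet: assumes "s > 0" shows "schwartz (wave_packet s)"
proof -
  have eq: "wave_packet s = (\<lambda>y. complex_of_real (gaussian 0 (2 * s) y) * cis ((1/s) * y)
      - complex_of_real (gaussian 0 s y) * cis ((1/s) * y))"
    by (auto simp: fun_eq_iff wave_packet_def algebra_simps)
  show ?thesis unfolding eq using assms by (intro schwartz_diff schwartz_gaussian_cis) auto
qed

definition gauss_hat_deriv :: "real \<Rightarrow> real \<Rightarrow> real" where
  "gauss_hat_deriv \<sigma> u = \<sigma> * sqrt (2*pi) * (- \<sigma>\<^sup>2 * u) * exp (- \<sigma>\<^sup>2 * u\<^sup>2 / 2)"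

lemma gauss_hat_has_real_derivative: "(gauss_hat \<sigma> has_real_derivative gauss_hat_deriv \<sigma> u) (at u)"
  unfolding gauss_hat_def gauss_hat_deriv_def
  by (auto intro!: derivative_eq_intros simp: algebra_simps power2_eq_square)

lemma gauss_hat_shift_has_real_derivative:
  "((\<lambda>x. gauss_hat \<sigma> (x - c)) has_real_derivative gauss_hat_deriv \<sigma> (x - c)) (at x)"
proof -
  have "((\<lambda>x. x - c) has_real_derivative 1) (at x)" by (auto intro!: derivative_eq_intros)
  from DERIV_chain2[OF gauss_hat_has_real_derivative this] show ?thesis by simp
qed

lemma gauss_hat_nonneg: "\<sigma> \<ge> 0 \<Longrightarrow> gauss_hat \<sigma> u \<ge> 0"
  by (simp add: gauss_hat_def)

lemma gauss_hat_le: "\<sigma> \<ge> 0 \<Longrightarrow> gauss_hat \<sigma> u \<le> \<sigma> * sqrt (2*pi)"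
  unfolding gauss_hat_def by (rule mult_left_le) auto

lemma gauss_hat_deriv_nonneg: "\<sigma> \<ge> 0 \<Longrightarrow> u \<le> 0 \<Longrightarrow> gauss_hat_deriv \<sigma> u \<ge> 0"
proof -
  assume "\<sigma> \<ge> 0" "u \<le> 0"
  then have "0 \<le> (- \<sigma>\<^sup>2) * u" by (intro mult_nonpos_nonpos) auto
  then have h: "0 \<le> - \<sigma>\<^sup>2 * u" by simp
  show ?thesis using \<open>\<sigma> \<ge> 0\<close> unfolding gauss_hat_deriv_def by (intro mult_nonneg_nonneg h exp_ge_zero) auto
qed

lemma isCont_gauss_hat_deriv [simp]: "isCont (\<lambda>x. gauss_hat_deriv \<sigma> (x - c)) u"
  unfolding gauss_hat_deriv_def by (intro continuous_intros) auto

lemma continuous_on_gauss_hat_deriv [continuous_intros]: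
  "continuous_on S (\<lambda>x. gauss_hat_deriv \<sigma> (x - c))"
  by (intro continuous_at_imp_continuous_on ballI isCont_gauss_hat_deriv)

lemma continuous_on_wave_packet_hat [continuous_intros]: "continuous_on S (wave_packet_hat s)"
  unfolding wave_packet_hat_def[abs_def] gauss_hat_def by (intro continuous_intros) auto

lemma integrable_wave_packet_hat: "s > 0 \<Longrightarrow> integrable lborel (wave_packet_hat s)"
  unfolding wave_packet_hat_def[abs_def] by (intro Bochner_Integration.integrable_diff integrable_gauss_hat) auto

definition wave_packet_hat_deriv :: "real \<Rightarrow> real \<Rightarrow> real" where
  "wave_packet_hat_deriv s \<xi> = gauss_hat_deriv (2 * s) (\<xi> - 1/s) - gauss_hat_deriv s (\<xi> - 1/s)"

lemma wave_packet_hat_has_real_derivative: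
  "(wave_packet_hat s has_real_derivative wave_packet_hat_deriv s x) (at x)"
  unfolding wave_packet_hat_def[abs_def] wave_packet_hat_deriv_def
  by (intro derivative_intros gauss_hat_shift_has_real_derivative)

lemma abs_wave_packet_hat_deriv_le:
  assumes "x \<le> 1/s" "s > 0"
  shows "\<bar>wave_packet_hat_deriv s x\<bar> \<le> gauss_hat_deriv (2 * s) (x - 1/s) + gauss_hat_deriv s (x - 1/s)"
proof -
  have "gauss_hat_deriv (2 * s) (x - 1/s) \<ge> 0" "gauss_hat_deriv s (x - 1/s) \<ge> 0"
    using gauss_hat_deriv_nonneg assms by auto
  then show ?thesis unfolding wave_packet_hat_deriv_def by linarith
qed

text \<open>On \<open>(-\<infinity>, 1/s]\<close> both Gaussians in \<open>wave_packet_hat\<close> are increasing, so the remainder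
  of an integration by parts against \<open>sin (2 x) / 2\<close> is controlled by their total variation.\<close>

lemma wave_packet_hat_deriv_sin_Icc_bound:
  assumes s: "s > 0" and a: "a \<le> 0"
  shows "\<bar>LINT x|lborel. indicator {a..0} x *\<^sub>R (wave_packet_hat_deriv s x * (sin (2 * x) / 2))\<bar>
           \<le> 3 * s * sqrt (2*pi) / 2"
proof -
  let ?c = "1/s"
  let ?G = "\<lambda>\<sigma> x. gauss_hat_deriv \<sigma> (x - ?c) * indicator {a..0} x"
  have pointwise: "\<bar>indicator {a..0} x *\<^sub>R (wave_packet_hat_deriv s x * (sin (2 * x) / 2))\<bar>
      \<le> (?G (2 * s) x + ?G s x) / 2" for x
  proof (cases "x \<in> {a..0}")
    case True
    then have "x \<le> 1/s" using s by (simp add: order_trans[of _ 0])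
    then have "\<bar>wave_packet_hat_deriv s x\<bar> \<le> gauss_hat_deriv (2 * s) (x - ?c) + gauss_hat_deriv s (x - ?c)"
      using s by (rule abs_wave_packet_hat_deriv_le)
    moreover have "\<bar>sin (2 * x) / 2\<bar> \<le> 1 / 2" by (simp add: abs_sin_le_one)
    ultimately have "\<bar>wave_packet_hat_deriv s x\<bar> * \<bar>sin (2 * x) / 2\<bar>
        \<le> (gauss_hat_deriv (2 * s) (x - ?c) + gauss_hat_deriv s (x - ?c)) * (1/2)"
      by (intro mult_mono) auto
    then show ?thesis using True by (simp add: abs_mult)
  qed simp
  have integrable: "integrable lborel (?G \<sigma>)" for \<sigma>
    by (rule borel_integrable_atLeastAtMost) (auto intro!: continuous_intros)
  have ftc: "(LINT x|lborel. ?G \<sigma> x) = gauss_hat \<sigma> (0 - ?c) - gauss_hat \<sigma> (a - ?c)" for \<sigma>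
    by (rule integral_FTC_Icc_real[OF a gauss_hat_shift_has_real_derivative]) (auto intro!: continuous_intros)
  have "\<bar>LINT x|lborel. indicator {a..0} x *\<^sub>R (wave_packet_hat_deriv s x * (sin (2 * x) / 2))\<bar>
      \<le> (LINT x|lborel. (?G (2 * s) x + ?G s x) / 2)"
  proof (rule order_trans[OF integral_abs_bound integral_mono])
    show "integrable lborel (\<lambda>x. \<bar>indicator {a..0} x *\<^sub>R (wave_packet_hat_deriv s x * (sin (2 * x) / 2))\<bar>)"
      by (intro integrable_abs borel_integrable_atLeastAtMost'[unfolded set_integrable_def])
        (auto intro!: continuous_intros simp: wave_packet_hat_deriv_def)
    show "integrable lborel (\<lambda>x. (?G (2 * s) x + ?G s x) / 2)"
      by (intro integrable_divide Bochner_Integration.integrable_add integrable)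
  qed (rule pointwise)
  also have "\<dots> = ((gauss_hat (2 * s) (0 - ?c) - gauss_hat (2 * s) (a - ?c))
                   + (gauss_hat s (0 - ?c) - gauss_hat s (a - ?c))) / 2"
    by (simp add: Bochner_Integration.integral_add integrable ftc)
  also have "\<dots> \<le> 3 * s * sqrt (2*pi) / 2"
  proof -
    have "gauss_hat (2 * s) (0 - ?c) \<le> 2 * s * sqrt (2*pi)" "gauss_hat s (0 - ?c) \<le> s * sqrt (2*pi)"
      "gauss_hat (2 * s) (a - ?c) \<ge> 0" "gauss_hat s (a - ?c) \<ge> 0"
      using gauss_hat_le gauss_hat_nonneg s by auto
    then show ?thesis by (simp add: field_simps)
  qed
  finally show ?thesis .
qed

lemma wave_packet_hat_cos_Icc_bound:
  assumes s: "s > 0" and a: "a \<le> 0"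
  shows "\<bar>LINT x|lborel. indicator {a..0} x *\<^sub>R (wave_packet_hat s x * cos (2 * x))\<bar> \<le> 3 * s * sqrt (2*pi)"
proof -
  have by_parts: "(LINT x|lborel. indicator {a..0} x *\<^sub>R (wave_packet_hat s x * cos (2 * x)))
      = wave_packet_hat s 0 * (sin (2 * 0) / 2) - wave_packet_hat s a * (sin (2 * a) / 2)
        - (LINT x|lborel. indicator {a..0} x *\<^sub>R (wave_packet_hat_deriv s x * (sin (2 * x) / 2)))"
    unfolding wave_packet_hat_deriv_def
    by (rule integral_by_parts'[OF a])
      (auto intro!: continuous_intros derivative_eq_intros
        wave_packet_hat_has_real_derivative[unfolded wave_packet_hat_deriv_def])
  have "\<bar>wave_packet_hat s a\<bar> \<le> 2 * s * sqrt (2*pi) + s * sqrt (2*pi)"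
    unfolding wave_packet_hat_def
    using gauss_hat_le[of "2 * s"] gauss_hat_le[of s] gauss_hat_nonneg[of "2 * s"] gauss_hat_nonneg[of s] s
    by (smt (verit) mult_nonneg_nonneg)
  moreover have "\<bar>sin (2 * a) / 2\<bar> \<le> 1 / 2" by (simp add: abs_sin_le_one)
  ultimately have "\<bar>wave_packet_hat s a\<bar> * \<bar>sin (2 * a) / 2\<bar> \<le> (3 * s * sqrt (2*pi)) * (1/2)"
    by (intro mult_mono) auto
  then have "\<bar>wave_packet_hat s a * (sin (2 * a) / 2)\<bar> \<le> 3 * s * sqrt (2*pi) / 2"
    by (simp add: abs_mult)
  then show ?thesis unfolding by_parts using wave_packet_hat_deriv_sin_Icc_bound[OF s a] by simp
qed

lemma integrable_wave_packet_hat_times_cos: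
  assumes "s > 0" and "continuous_on UNIV \<theta>"
  shows "integrable lborel (\<lambda>\<xi>. wave_packet_hat s \<xi> * cos (\<theta> \<xi>))"
proof (rule Bochner_Integration.integrable_bound[OF integrable_wave_packet_hat[OF assms(1)]])
  show "(\<lambda>\<xi>. wave_packet_hat s \<xi> * cos (\<theta> \<xi>)) \<in> borel_measurable lborel"
    using assms(2) by (auto intro!: borel_measurable_continuous_onI continuous_intros)
  show "AE x in lborel. norm (wave_packet_hat s x * cos (\<theta> x)) \<le> norm (wave_packet_hat s x)"
    by (auto simp: abs_mult intro!: mult_left_le abs_cos_le_one)
qed

lemma wave_packet_hat_cos_nonpos_bound:
  assumes s: "s > 0"
  shows "\<bar>LINT x|lborel. indicator {..0} x *\<^sub>R (wave_packet_hat s x * cos (2 * x))\<bar> \<le> 3 * s * sqrt (2*pi)"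
proof -
  let ?f = "\<lambda>x. wave_packet_hat s x * cos (2 * x)"
  have "set_integrable lborel {..0} ?f"
    unfolding set_integrable_def using s
    by (intro integrable_mult_indicator integrable_wave_packet_hat_times_cos) (auto intro!: continuous_intros)
  then have "((\<lambda>a. \<bar>set_lebesgue_integral lborel {a..0} ?f\<bar>) \<longlongrightarrow> \<bar>set_lebesgue_integral lborel {..0} ?f\<bar>) at_bot"
    by (intro tendsto_rabs tendsto_set_lebesgue_integral_at_bot) auto
  moreover have "eventually (\<lambda>a. \<bar>set_lebesgue_integral lborel {a..0} ?f\<bar> \<le> 3 * s * sqrt (2*pi)) at_bot"
    unfolding eventually_at_bot_linorder set_lebesgue_integral_def
    by (intro exI[of _ 0] allI impI wave_packet_hat_cos_Icc_bound[OF s])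
  ultimately have "\<bar>set_lebesgue_integral lborel {..0} ?f\<bar> \<le> 3 * s * sqrt (2*pi)"
    by (rule tendsto_upperbound) simp
  then show ?thesis unfolding set_lebesgue_integral_def .
qed

text \<open>\<open>gauss_hat_gap * s * sqrt (2 * pi)\<close> bounds \<open>gauss_hat s x - gauss_hat (2 * s) x\<close> from below
  on \<open>[-2/s, -1/s]\<close>; in terms of \<open>t = s\<^sup>2 x\<^sup>2 \<in> [1, 4]\<close> that difference is
  \<open>s * sqrt (2 * pi) * exp (- t / 2) * (1 - 2 * exp (- 3 * t / 2))\<close>.\<close>

definition gauss_hat_gap :: real where "gauss_hat_gap = exp (-2) * (1 - 2 * exp (- 3/2))"

lemma two_exp_minus_three_halves_less_one: "2 * exp (- 3/2 :: real) < 1"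
proof -
  have "1 + 3/2 \<le> exp (3/2 :: real)" by (rule exp_ge_add_one_self)
  then show ?thesis by (simp add: exp_minus field_simps)
qed

lemma gauss_hat_gap_pos: "gauss_hat_gap > 0"
  unfolding gauss_hat_gap_def using two_exp_minus_three_halves_less_one by simp

lemma gauss_hat_sub_gauss_hat_double:
  assumes s: "s > 0" and x: "x \<le> - 1/s"
  shows "gauss_hat s x - gauss_hat (2 * s) x \<ge> 0"
    and "x \<ge> - 2/s \<Longrightarrow> gauss_hat s x - gauss_hat (2 * s) x \<ge> s * sqrt (2*pi) * gauss_hat_gap"
proof -
  define t where "t = s\<^sup>2 * x\<^sup>2"
  have "1 \<le> s * (- x)" using s x by (simp add: field_simps)
  then have "1\<^sup>2 \<le> (s * (- x))\<^sup>2" by (intro power_mono) auto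
  then have t1: "t \<ge> 1" by (simp add: t_def power_mult_distrib)
  have eq: "gauss_hat s x - gauss_hat (2 * s) x = s * sqrt (2*pi) * (exp (- t / 2) * (1 - 2 * exp (- 3 * t / 2)))"
  proof -
    have "exp (- ((2 * s)\<^sup>2 * x\<^sup>2) / 2) = exp (- t / 2) * exp (- 3 * t / 2)"
      by (simp add: t_def exp_add[symmetric] power_mult_distrib)
    then show ?thesis by (simp add: gauss_hat_def t_def algebra_simps)
  qed
  have f1: "1 - 2 * exp (- 3 * t / 2) \<ge> 1 - 2 * exp (- 3/2)" using t1 by simp
  have f2: "1 - 2 * exp (- 3/2) > (0::real)" using two_exp_minus_three_halves_less_one by simp
  have "0 \<le> 1 - 2 * exp (- 3 * t / 2)" using f1 f2 by linarith
  then show "gauss_hat s x - gauss_hat (2 * s) x \<ge> 0" unfolding eq using s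
    by (intro mult_nonneg_nonneg) auto
  assume "x \<ge> - 2/s"
  then have "s * (- x) \<le> 2" using s by (simp add: field_simps)
  moreover have "0 \<le> s * (- x)" using \<open>1 \<le> s * (- x)\<close> by linarith
  ultimately have "(s * (- x))\<^sup>2 \<le> 2\<^sup>2" by (intro power_mono) auto
  then have "t \<le> 4" by (simp add: t_def power_mult_distrib)
  then have "exp (-2) \<le> exp (- t / 2)" by simp
  then have "gauss_hat_gap \<le> exp (- t / 2) * (1 - 2 * exp (- 3 * t / 2))"
    unfolding gauss_hat_gap_def using f1 f2 by (intro mult_mono) auto
  then show "gauss_hat s x - gauss_hat (2 * s) x \<ge> s * sqrt (2*pi) * gauss_hat_gap"
    unfolding eq using s by (intro mult_left_mono) auto
qed

text \<open>Both Gaussians in \<open>wave_packet_hat\<close> have total mass \<open>2 * pi\<close>, so the mass on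
  \<open>\<xi> > 0\<close> equals the mass of \<open>gauss_hat s - gauss_hat (2 * s)\<close> to the left of \<open>-1/s\<close>.\<close>

lemma wave_packet_hat_positive_part_ge:
  assumes s: "s > 0"
  shows "(LINT x|lborel. indicator {0<..} x * wave_packet_hat s x) \<ge> sqrt (2*pi) * gauss_hat_gap"
proof -
  define D where "D x = gauss_hat (2 * s) x - gauss_hat s x" for x
  have int: "integrable lborel (gauss_hat \<sigma>)" and mass: "(LINT x|lborel. gauss_hat \<sigma> x) = 2 * pi"
    if "\<sigma> > 0" for \<sigma>
    using integrable_gauss_hat[OF that, of 0] integral_gauss_hat[OF that, of 0] by simp_all
  have intD: "integrable lborel D"
    unfolding D_def[abs_def] using s by (intro Bochner_Integration.integrable_diff int) auto
  have int_tail: "integrable lborel (\<lambda>x. indicator {..- 1/s} x * D x)"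
    using integrable_real_mult_indicator[OF _ intD, of "{..- 1/s}"] by (simp add: mult.commute)
  have "(LINT x|lborel. D x) = (LINT x|lborel. gauss_hat (2 * s) x) - (LINT x|lborel. gauss_hat s x)"
    unfolding D_def using s by (intro Bochner_Integration.integral_diff int) auto
  then have intD0: "(LINT x|lborel. D x) = 0" using s by (simp add: mass)
  have "(LINT x|lborel. indicator {0<..} x * wave_packet_hat s x)
      = (LINT x|lborel. indicator {0<..} (1/s + 1 * x) * wave_packet_hat s (1/s + 1 * x))"
    using lborel_integral_real_affine[of 1 _ "1/s"] by simp
  also have "\<dots> = (LINT x|lborel. D x - indicator {..- 1/s} x * D x)"
    by (intro Bochner_Integration.integral_cong refl)
      (auto simp: indicator_def D_def wave_packet_hat_def)
  also have "\<dots> = (LINT x|lborel. indicator {..- 1/s} x * (- D x))"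
    unfolding Bochner_Integration.integral_diff[OF intD int_tail] intD0 by simp
  also have "\<dots> \<ge> (LINT x|lborel. indicator {- 2/s..- 1/s} x * (s * sqrt (2*pi) * gauss_hat_gap))"
  proof (rule integral_mono)
    show "integrable lborel (\<lambda>x. indicator {- 2/s..- 1/s} x * (s * sqrt (2*pi) * gauss_hat_gap))"
      using borel_integrable_atLeastAtMost[of "- 2/s" "- 1/s" "\<lambda>x. s * sqrt (2*pi) * gauss_hat_gap"]
      by (simp add: mult.commute)
    show "integrable lborel (\<lambda>x. indicator {..- 1/s} x * (- D x))"
      using int_tail by simp
    show "indicator {- 2/s..- 1/s} x * (s * sqrt (2*pi) * gauss_hat_gap) \<le> indicator {..- 1/s} x * (- D x)" for x
      using gauss_hat_sub_gauss_hat_double[OF s, of x] by (auto simp: indicator_def D_def)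
  qed
  also have "(LINT x|lborel. indicator {- 2/s..- 1/s} x * (s * sqrt (2*pi) * gauss_hat_gap))
      = sqrt (2*pi) * gauss_hat_gap"
    using s by (simp add: measure_lborel_Icc field_simps)
  finally show ?thesis .
qed

lemma wave_packet_hat_phase_integral_ge:
  assumes s: "s > 0"
  shows "(LINT \<xi>|lborel. wave_packet_hat s \<xi> * cos (\<bar>\<xi>\<bar> - \<xi>))
           \<ge> sqrt (2*pi) * gauss_hat_gap - 3 * s * sqrt (2*pi)"
proof -
  have split: "(\<lambda>\<xi>. wave_packet_hat s \<xi> * cos (\<bar>\<xi>\<bar> - \<xi>))
      = (\<lambda>\<xi>. indicator {0<..} \<xi> * wave_packet_hat s \<xi> + indicator {..0} \<xi> *\<^sub>R (wave_packet_hat s \<xi> * cos (2 * \<xi>)))"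
    by (auto simp: fun_eq_iff indicator_def)
  have "integrable lborel (\<lambda>\<xi>. indicator {0<..} \<xi> * wave_packet_hat s \<xi>)"
    using integrable_real_mult_indicator[OF _ integrable_wave_packet_hat[OF s], of "{0<..}"]
    by (simp add: mult.commute)
  moreover have "integrable lborel (\<lambda>\<xi>. indicator {..0} \<xi> *\<^sub>R (wave_packet_hat s \<xi> * cos (2 * \<xi>)))"
    using s by (intro integrable_mult_indicator integrable_wave_packet_hat_times_cos) (auto intro!: continuous_intros)
  ultimately have "(LINT \<xi>|lborel. wave_packet_hat s \<xi> * cos (\<bar>\<xi>\<bar> - \<xi>))
      = (LINT \<xi>|lborel. indicator {0<..} \<xi> * wave_packet_hat s \<xi>)
        + (LINT \<xi>|lborel. indicator {..0} \<xi> *\<^sub>R (wave_packet_hat s \<xi> * cos (2 * \<xi>)))"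
    unfolding split by (rule Bochner_Integration.integral_add)
  then show ?thesis
    using wave_packet_hat_positive_part_ge[OF s] wave_packet_hat_cos_nonpos_bound[OF s] by linarith
qed

definition packet_scale :: "nat \<Rightarrow> real" where "packet_scale k = 1 / 2 ^ (k + 1)"

definition test_fun :: "nat \<Rightarrow> real \<Rightarrow> complex" where
  "test_fun N y = (\<Sum>k<N. wave_packet (packet_scale k) y)"

definition test_fun_hat :: "nat \<Rightarrow> real \<Rightarrow> real" where
  "test_fun_hat N \<xi> = (\<Sum>k<N. wave_packet_hat (packet_scale k) \<xi>)"

lemma packet_scale_pos: "packet_scale k > 0"
  by (simp add: packet_scale_def)

lemma sum_packet_scale_le_one: "(\<Sum>k<N. packet_scale k) \<le> 1"
proof -
  have "(\<Sum>k<N. packet_scale k) = 1 - 1 / 2 ^ N"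
    by (induction N) (simp_all add: packet_scale_def field_simps)
  then show ?thesis by simp
qed

lemma fourier_test_fun: "fourier (test_fun N) \<xi> = complex_of_real (test_fun_hat N \<xi>)"
proof -
  have "fourier (test_fun N) \<xi> = (LINT y|lborel. (\<Sum>k<N. wave_packet (packet_scale k) y * cis (- y * \<xi>)))"
    unfolding fourier_def test_fun_def by (simp add: sum_distrib_right)
  also have "\<dots> = (\<Sum>k<N. fourier (wave_packet (packet_scale k)) \<xi>)"
    unfolding fourier_def
    by (intro Bochner_Integration.integral_sum integrable_wave_packet_cis packet_scale_pos)
  finally show ?thesis by (simp add: fourier_wave_packet packet_scale_pos test_fun_hat_def)
qed

lemma schwartz_test_fun: "schwartz (test_fun N)"
  unfolding test_fun_def[abs_def]
  by (intro schwartz_sum schwartz_wave_packet packet_scale_pos) auto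

lemma norm_test_fun_le_one: "norm (test_fun N y) \<le> 1"
proof -
  define e where "e j = gaussian 0 (1 / 2 ^ j) y" for j :: nat
  have packet_norm: "norm (wave_packet (packet_scale k) y) = e k - e (Suc k)" for k
  proof -
    have "e (Suc k) \<le> e k" unfolding e_def gaussian_def by (simp add: field_simps)
    moreover have packet: "wave_packet (packet_scale k) y = complex_of_real (e k - e (Suc k)) * cis (y / packet_scale k)"
    proof -
      have two: "2 * packet_scale k = 1 / 2 ^ k" by (simp add: packet_scale_def)
      show ?thesis unfolding wave_packet_def e_def two by (simp add: packet_scale_def)
    qed
    ultimately show ?thesis unfolding packet norm_mult norm_of_real norm_cis by simp
  qed
  have "norm (test_fun N y) \<le> (\<Sum>k<N. norm (wave_packet (packet_scale k) y))"
    unfolding test_fun_def by (rule norm_sum)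
  also have "\<dots> = (\<Sum>k<N. e k - e (Suc k))" by (simp add: packet_norm)
  also have "\<dots> = e 0 - e N" by (rule sum_lessThan_telescope')
  also have "\<dots> \<le> 1"
  proof -
    have "e 0 \<le> 1" "e N \<ge> 0" unfolding e_def gaussian_def by simp_all
    then show ?thesis by linarith
  qed
  finally show ?thesis .
qed

lemma sup_norm_test_fun: "0 \<le> sup_norm (test_fun N)" "sup_norm (test_fun N) \<le> 1"
proof -
  have "bdd_above (range (\<lambda>x. norm (test_fun N x)))"
    by (rule bdd_aboveI2[where M=1]) (rule norm_test_fun_le_one)
  then have "norm (test_fun N 0) \<le> sup_norm (test_fun N)"
    unfolding sup_norm_def by (rule cSUP_upper[OF UNIV_I])
  then show "0 \<le> sup_norm (test_fun N)" using norm_ge_zero order_trans by blast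
  show "sup_norm (test_fun N) \<le> 1"
    unfolding sup_norm_def by (rule cSUP_least) (auto intro: norm_test_fun_le_one)
qed

lemma integrable_test_fun_hat: "integrable lborel (test_fun_hat N)"
  unfolding test_fun_hat_def[abs_def]
  by (intro Bochner_Integration.integrable_sum integrable_wave_packet_hat packet_scale_pos)

lemma continuous_on_test_fun_hat [continuous_intros]: "continuous_on A (test_fun_hat N)"
  unfolding test_fun_hat_def[abs_def] by (intro continuous_intros)

lemma test_fun_hat_phase_integral_ge:
  "(LINT \<xi>|lborel. test_fun_hat N \<xi> * cos (\<bar>\<xi>\<bar> - \<xi>))
     \<ge> real N * sqrt (2*pi) * gauss_hat_gap - 3 * sqrt (2*pi)"
proof -
  have "(LINT \<xi>|lborel. test_fun_hat N \<xi> * cos (\<bar>\<xi>\<bar> - \<xi>))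
      = (\<Sum>k<N. LINT \<xi>|lborel. wave_packet_hat (packet_scale k) \<xi> * cos (\<bar>\<xi>\<bar> - \<xi>))"
    unfolding test_fun_hat_def sum_distrib_right
    by (intro Bochner_Integration.integral_sum integrable_wave_packet_hat_times_cos packet_scale_pos)
      (auto intro!: continuous_intros)
  also have "\<dots> \<ge> (\<Sum>k<N. sqrt (2*pi) * gauss_hat_gap - 3 * packet_scale k * sqrt (2*pi))"
    by (intro sum_mono wave_packet_hat_phase_integral_ge packet_scale_pos)
  finally have "(LINT \<xi>|lborel. test_fun_hat N \<xi> * cos (\<bar>\<xi>\<bar> - \<xi>))
      \<ge> real N * sqrt (2*pi) * gauss_hat_gap - 3 * sqrt (2*pi) * (\<Sum>k<N. packet_scale k)"
    by (simp add: sum_subtractf sum_distrib_left sum_distrib_right mult_ac)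
  moreover have "3 * sqrt (2*pi) * (\<Sum>k<N. packet_scale k) \<le> 3 * sqrt (2*pi)"
    using sum_packet_scale_le_one[of N] by (simp add: mult_left_le)
  ultimately show ?thesis by linarith
qed

definition osc_integral :: "nat \<Rightarrow> real \<Rightarrow> complex" where
  "osc_integral N x = (LINT \<xi>|lborel. complex_of_real (test_fun_hat N \<xi>) * cis (x * \<xi> + \<bar>\<xi>\<bar>))"

lemma integrable_test_fun_hat_cis:
  "integrable lborel (\<lambda>\<xi>. complex_of_real (test_fun_hat N \<xi>) * cis (x * \<xi> + \<bar>\<xi>\<bar>))"
  by (rule Bochner_Integration.integrable_bound[OF integrable_test_fun_hat])
    (auto intro!: borel_measurable_continuous_onI continuous_intros simp: norm_mult)

lemma isCont_osc_integral: "isCont (osc_integral N) x"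
proof (rule continuous_at_sequentiallyI)
  fix u :: "nat \<Rightarrow> real" assume u: "u \<longlonglongrightarrow> x"
  show "(\<lambda>n. osc_integral N (u n)) \<longlonglongrightarrow> osc_integral N x"
    unfolding osc_integral_def
  proof (rule integral_dominated_convergence[where w = "\<lambda>\<xi>. \<bar>test_fun_hat N \<xi>\<bar>"])
    show "(\<lambda>\<xi>. complex_of_real (test_fun_hat N \<xi>) * cis (x * \<xi> + \<bar>\<xi>\<bar>)) \<in> borel_measurable lborel"
      by (auto intro!: borel_measurable_continuous_onI continuous_intros)
    show "(\<lambda>\<xi>. complex_of_real (test_fun_hat N \<xi>) * cis (u i * \<xi> + \<bar>\<xi>\<bar>)) \<in> borel_measurable lborel" for i
      by (auto intro!: borel_measurable_continuous_onI continuous_intros)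
    show "integrable lborel (\<lambda>\<xi>. \<bar>test_fun_hat N \<xi>\<bar>)"
      by (intro integrable_abs integrable_test_fun_hat)
    show "AE \<xi> in lborel. (\<lambda>i. complex_of_real (test_fun_hat N \<xi>) * cis (u i * \<xi> + \<bar>\<xi>\<bar>))
        \<longlonglongrightarrow> complex_of_real (test_fun_hat N \<xi>) * cis (x * \<xi> + \<bar>\<xi>\<bar>)"
      using u by (intro AE_I2 tendsto_intros)
    show "AE \<xi> in lborel. norm (complex_of_real (test_fun_hat N \<xi>) * cis (u i * \<xi> + \<bar>\<xi>\<bar>))
        \<le> \<bar>test_fun_hat N \<xi>\<bar>" for i
      by (simp add: norm_mult)
  qed
qed

lemma norm_osc_integral_le: "norm (osc_integral N x) \<le> (LINT \<xi>|lborel. \<bar>test_fun_hat N \<xi>\<bar>)"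
proof -
  have "norm (osc_integral N x)
      \<le> (LINT \<xi>|lborel. norm (complex_of_real (test_fun_hat N \<xi>) * cis (x * \<xi> + \<bar>\<xi>\<bar>)))"
    unfolding osc_integral_def by (rule integral_norm_bound)
  then show ?thesis by (simp add: norm_mult)
qed

lemma Re_osc_integral_minus_one:
  "Re (osc_integral N (-1)) = (LINT \<xi>|lborel. test_fun_hat N \<xi> * cos (\<bar>\<xi>\<bar> - \<xi>))"
  unfolding osc_integral_def integral_Re[OF integrable_test_fun_hat_cis, symmetric] by simp

lemma osc_integral_unbounded: "\<exists>N. B < norm (osc_integral N (-1))"
proof -
  obtain N :: nat where "(B + 3 * sqrt (2*pi)) / (sqrt (2*pi) * gauss_hat_gap) < real N"
    using reals_Archimedean2 by blast
  then have "B < real N * sqrt (2*pi) * gauss_hat_gap - 3 * sqrt (2*pi)"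
    using gauss_hat_gap_pos by (simp add: divide_less_eq mult_ac)
  also have "\<dots> \<le> Re (osc_integral N (-1))"
    unfolding Re_osc_integral_minus_one by (rule test_fun_hat_phase_integral_ge)
  also have "\<dots> \<le> norm (osc_integral N (-1))" by (rule complex_Re_le_cmod)
  finally show ?thesis ..
qed

lemma schwartz_gaussian: "w > 0 \<Longrightarrow> schwartz (\<lambda>y. complex_of_real (gaussian c w y))"
  using schwartz_gaussian_cis[of w c 0] by simp

lemma fourier_inversion_gaussian:
  assumes w: "w > 0"
  shows "(LINT \<eta>|lborel. fourier (\<lambda>y. complex_of_real (gaussian x0 w y)) \<eta> * cis (x * \<eta>))
           = 2 * pi * gaussian x0 w x"
proof -
  have w': "1 / w > 0" using w by simp
  have "fourier (\<lambda>y. complex_of_real (gaussian x0 w y)) \<eta> * cis (x * \<eta>)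
      = complex_of_real (w * sqrt (2*pi)) * (complex_of_real (gaussian 0 (1/w) \<eta>) * cis (- \<eta> * (x0 - x)))" for \<eta>
  proof -
    have "cis (- x0 * \<eta>) * cis (x * \<eta>) = cis (- \<eta> * (x0 - x))" unfolding cis_mult by (simp add: algebra_simps)
    then show ?thesis using w by (simp add: fourier_gaussian gauss_hat_eq_gaussian mult_ac)
  qed
  then have "(LINT \<eta>|lborel. fourier (\<lambda>y. complex_of_real (gaussian x0 w y)) \<eta> * cis (x * \<eta>))
      = complex_of_real (w * sqrt (2*pi)) * fourier (\<lambda>y. complex_of_real (gaussian 0 (1/w) y)) (x0 - x)"
    unfolding fourier_def by simp
  also have "\<dots> = complex_of_real (w * sqrt (2*pi) * gauss_hat (1/w) (x0 - x))"
    using w' by (simp add: fourier_gaussian)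
  also have "w * sqrt (2*pi) * gauss_hat (1/w) (x0 - x) = 2 * pi * gaussian x0 w x"
  proof -
    have "sqrt (2*pi) * sqrt (2*pi) = 2 * pi" by simp
    moreover have "- (1/w)\<^sup>2 * (x0 - x)\<^sup>2 / 2 = - (x - x0)\<^sup>2 / (2 * w\<^sup>2)"
      using w by (simp add: power_divide power2_commute)
    ultimately show ?thesis using w by (simp add: gauss_hat_def gaussian_def field_simps)
  qed
  finally show ?thesis by simp
qed

lemma T_op_test_fun_gaussian:
  assumes w: "w > 0"
  shows "T_op chi (test_fun N) (\<lambda>y. complex_of_real (gaussian x0 w y)) x
           = complex_of_real (chi x * gaussian x0 w x) * osc_integral N x / (2 * pi)"
proof -
  let ?g = "\<lambda>y. complex_of_real (gaussian x0 w y)"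
  let ?a = "\<lambda>\<xi>. complex_of_real (chi x) * complex_of_real (test_fun_hat N \<xi>) * cis (x * \<xi> + \<bar>\<xi>\<bar>) / (2 * pi)\<^sup>2"
  have inner: "(LINT \<eta>|lborel. complex_of_real (chi x) * fourier (test_fun N) \<xi> * fourier ?g \<eta>
      * cis ((x * \<xi> + \<bar>\<xi>\<bar>) + x * \<eta>) / (2 * pi)\<^sup>2) = ?a \<xi> * (2 * pi * gaussian x0 w x)" for \<xi>
  proof -
    have "(LINT \<eta>|lborel. complex_of_real (chi x) * fourier (test_fun N) \<xi> * fourier ?g \<eta>
        * cis ((x * \<xi> + \<bar>\<xi>\<bar>) + x * \<eta>) / (2 * pi)\<^sup>2) = (LINT \<eta>|lborel. ?a \<xi> * (fourier ?g \<eta> * cis (x * \<eta>)))"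
      by (intro Bochner_Integration.integral_cong refl) (simp add: fourier_test_fun cis_mult[symmetric] mult_ac)
    then show ?thesis by (simp only: integral_mult_right_zero fourier_inversion_gaussian[OF w])
  qed
  have "T_op chi (test_fun N) ?g x
      = (LINT \<xi>|lborel. (complex_of_real (chi x) / (2 * pi)\<^sup>2 * (2 * pi * gaussian x0 w x))
          * (complex_of_real (test_fun_hat N \<xi>) * cis (x * \<xi> + \<bar>\<xi>\<bar>)))"
    unfolding T_op_def inner by (intro Bochner_Integration.integral_cong refl) (simp add: mult_ac)
  also have "\<dots> = (complex_of_real (chi x) / (2 * pi)\<^sup>2 * (2 * pi * gaussian x0 w x)) * osc_integral N x"
    unfolding osc_integral_def by (rule integral_mult_right_zero)
  finally show ?thesis by (simp add: power2_eq_square field_simps)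
qed

lemma gaussian_pos: "gaussian c s y > 0"
  by (simp add: gaussian_def)

lemma gaussian_powr: "p > 0 \<Longrightarrow> gaussian c w y powr p = gaussian c (w / sqrt p) y"
  by (simp add: gaussian_def exp_powr_real power_divide divide_simps)

lemma Lp_norm_gaussian:
  assumes "w > 0" "p > 0"
  shows "Lp_norm p (\<lambda>y. complex_of_real (gaussian x0 w y)) = ((w / sqrt p) * sqrt (2*pi)) powr (1/p)"
proof -
  have "(\<lambda>y. norm (complex_of_real (gaussian x0 w y)) powr p) = gaussian x0 (w / sqrt p)"
    using assms(2) by (simp add: fun_eq_iff gaussian_powr gaussian_pos less_imp_le)
  then show ?thesis using assms integral_gaussian[of "w / sqrt p" x0] by (simp add: Lp_norm_def)
qed

lemma Lp_norm_gaussian_le: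
  assumes w: "w > 0" and p: "p \<ge> 1"
  shows "Lp_norm p (\<lambda>y. complex_of_real (gaussian x0 w y)) \<le> 3 * w powr (1/p)"
proof -
  have "sqrt (2*pi) \<le> sqrt (3\<^sup>2)" using pi_less_4 by (intro real_sqrt_le_mono) simp
  moreover have "w / sqrt p \<le> w" using w p by (simp add: divide_le_eq mult_le_cancel_left1)
  ultimately have "(w / sqrt p) * sqrt (2*pi) \<le> w * 3" using w by (intro mult_mono) auto
  then have "(w / sqrt p) * sqrt (2*pi) \<le> 3 * w" by (simp add: mult.commute)
  then have "Lp_norm p (\<lambda>y. complex_of_real (gaussian x0 w y)) \<le> (3 * w) powr (1/p)"
    using w p by (subst Lp_norm_gaussian) (auto intro!: powr_mono2)
  also have "\<dots> = 3 powr (1/p) * w powr (1/p)" using w by (simp add: powr_mult)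
  also have "\<dots> \<le> 3 * w powr (1/p)"
    using p powr_mono[of "1/p" 1 3] by (intro mult_right_mono) auto
  finally show ?thesis .
qed

lemma integrable_norm_powr_if_gaussian_bound:
  fixes h :: "real \<Rightarrow> complex"
  assumes h: "continuous_on UNIV h" and p: "p > 0" and w: "w > 0"
    and bound: "\<And>x. norm (h x) \<le> A * gaussian c w x"
  shows "integrable lborel (\<lambda>x. norm (h x) powr p)"
proof (rule Bochner_Integration.integrable_bound)
  show "integrable lborel (\<lambda>x. A powr p * gaussian c (w / sqrt p) x)"
    using w p by (intro integrable_mult_right integrable_gaussian) auto
  show "(\<lambda>x. norm (h x) powr p) \<in> borel_measurable lborel"
    using borel_measurable_continuous_onI[OF h] by measurable
  have "norm (h c) \<le> A" using bound[of c] by (simp add: gaussian_def)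
  then have "A \<ge> 0" using norm_ge_zero order_trans by blast
  then have "norm (h x) powr p \<le> A powr p * gaussian c (w / sqrt p) x" for x
    using powr_mono2[OF _ norm_ge_zero bound, of p x] p by (simp add: powr_mult gaussian_powr)
  then show "AE x in lborel. norm (norm (h x) powr p) \<le> norm (A powr p * gaussian c (w / sqrt p) x)"
    by (simp add: gaussian_def)
qed

lemma Lp_norm_ge_on_interval:
  fixes h :: "real \<Rightarrow> complex"
  assumes int: "integrable lborel (\<lambda>x. norm (h x) powr p)" and p: "p > 0" and ab: "a \<le> b"
    and m: "m \<ge> 0" and low: "\<And>x. x \<in> {a..b} \<Longrightarrow> m \<le> norm (h x)"
  shows "(b - a) powr (1/p) * m \<le> Lp_norm p h"
proof -
  have "(LINT x|lborel. indicator {a..b} x * m powr p) \<le> (LINT x|lborel. norm (h x) powr p)"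
  proof (rule integral_mono[OF _ int])
    show "integrable lborel (\<lambda>x. indicator {a..b} x * m powr p)"
      using borel_integrable_atLeastAtMost[of a b "\<lambda>x. m powr p"] by (simp add: mult.commute)
    show "indicator {a..b} x * m powr p \<le> norm (h x) powr p" for x
      using low[of x] m p by (cases "x \<in> {a..b}") (auto intro!: powr_mono2)
  qed
  then have "((b - a) * m powr p) powr (1/p) \<le> Lp_norm p h"
    unfolding Lp_norm_def using ab m p by (intro powr_mono2) (auto simp: measure_lborel_Icc)
  then show ?thesis using ab m p by (simp add: powr_mult powr_powr)
qed

lemma bounded_if_bounded_support:
  fixes f :: "real \<Rightarrow> real"
  assumes f: "continuous_on UNIV f" and supp: "bounded (closure {x. f x \<noteq> 0})"
  shows "\<exists>B. \<forall>x. \<bar>f x\<bar> \<le> B"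
proof -
  let ?K = "closure {x. f x \<noteq> 0}"
  have "compact (f ` ?K)"
    using supp by (intro compact_continuous_image continuous_on_subset[OF f]) (auto simp: compact_eq_bounded_closed)
  then obtain B where B: "\<And>x. x \<in> ?K \<Longrightarrow> \<bar>f x\<bar> \<le> B"
    unfolding bounded_real by (meson compact_imp_bounded bounded_real image_eqI)
  have "\<bar>f x\<bar> \<le> max B 0" for x
    using B[of x] closure_subset[of "{x. f x \<noteq> 0}"] by (cases "f x = 0") auto
  then show ?thesis by blast
qed

lemma smooth_real_isCont: "smooth_real f \<Longrightarrow> isCont f x"
  unfolding smooth_real_def by (metis funpow_0 differentiable_imp_continuous_within)

lemma smooth_real_continuous_on: "smooth_real f \<Longrightarrow> continuous_on S f"
  by (simp add: continuous_at_imp_continuous_on smooth_real_isCont)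

lemma integrable_norm_T_op_test_fun_gaussian_powr:
  assumes chi: "smooth_real chi" "closure {x. chi x \<noteq> 0} \<subseteq> {-2<..<2}" and p: "p > 0" and w: "w > 0"
  shows "integrable lborel (\<lambda>x. norm (T_op chi (test_fun N) (\<lambda>y. complex_of_real (gaussian x0 w y)) x) powr p)"
    (is "integrable lborel (\<lambda>x. norm (?T x) powr p)")
proof -
  have T: "?T x = complex_of_real (chi x * gaussian x0 w x) * osc_integral N x / (2 * pi)" for x
    by (rule T_op_test_fun_gaussian[OF w])
  obtain B where B: "\<And>x. \<bar>chi x\<bar> \<le> B"
    using bounded_if_bounded_support[OF smooth_real_continuous_on[OF chi(1)]]
      bounded_subset[OF bounded_box[of "-2" "2::real", unfolded box_real] chi(2)] by blast
  have cont: "continuous_on UNIV ?T"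
    unfolding T using w
    by (auto intro!: continuous_intros continuous_at_imp_continuous_on isCont_osc_integral
        smooth_real_isCont[OF chi(1)] simp: gaussian_def)
  have bound: "norm (?T x) \<le> (B * (LINT \<xi>|lborel. \<bar>test_fun_hat N \<xi>\<bar>) / (2 * pi)) * gaussian x0 w x" for x
  proof -
    have "norm (?T x) = \<bar>chi x\<bar> * norm (osc_integral N x) / (2 * pi) * gaussian x0 w x"
      unfolding T using gaussian_pos[of x0 w x] by (simp add: norm_mult norm_divide)
    also have "\<dots> \<le> (B * (LINT \<xi>|lborel. \<bar>test_fun_hat N \<xi>\<bar>) / (2 * pi)) * gaussian x0 w x"
      using B[of x] norm_osc_integral_le[of N x] gaussian_pos[of x0 w x]
      by (intro mult_right_mono divide_right_mono mult_mono) auto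
    finally show ?thesis .
  qed
  show ?thesis by (rule integrable_norm_powr_if_gaussian_bound[OF cont p w bound])
qed

lemma gaussian_ge_exp_minus_half:
  assumes "\<bar>x - c\<bar> \<le> w" "w > 0" shows "exp (- 1/2) \<le> gaussian c w x"
proof -
  have "\<bar>x - c\<bar>\<^sup>2 \<le> w\<^sup>2" using assms by (intro power_mono) auto
  then have "(x - c)\<^sup>2 \<le> w\<^sup>2" by simp
  then show ?thesis using assms(2) by (simp add: gaussian_def divide_simps)
qed

lemma Lp_norm_T_op_gaussian_ge:
  assumes chi: "smooth_real chi" "closure {x. chi x \<noteq> 0} \<subseteq> {-2<..<2}"
    and p: "p > 0" and w: "w > 0" and M: "M \<ge> 0"
    and near: "\<And>x. x \<in> {x0 - w..x0 + w} \<Longrightarrow> chi x = 1 \<and> M \<le> norm (osc_integral N x)"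
  shows "w powr (1/p) * (exp (- 1/2) * M / (2 * pi))
           \<le> Lp_norm p (T_op chi (test_fun N) (\<lambda>y. complex_of_real (gaussian x0 w y)))"
    (is "_ \<le> Lp_norm p ?T")
proof -
  let ?m = "exp (- 1/2) * M / (2 * pi)"
  have "?m \<le> norm (?T x)" if x: "x \<in> {x0 - w..x0 + w}" for x
  proof -
    have "?m \<le> gaussian x0 w x * norm (osc_integral N x) / (2 * pi)"
      using near[OF x] M gaussian_pos[of x0 w x] gaussian_ge_exp_minus_half[of x x0 w] x w
      by (intro divide_right_mono mult_mono) auto
    also have "\<dots> = norm (?T x)"
      using near[OF x] gaussian_pos[of x0 w x]
      by (simp add: T_op_test_fun_gaussian[OF w] norm_mult norm_divide)
    finally show ?thesis .
  qed
  then have "((x0 + w) - (x0 - w)) powr (1/p) * ?m \<le> Lp_norm p ?T"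
    using integrable_norm_T_op_test_fun_gaussian_powr[OF chi p w] p w M
    by (intro Lp_norm_ge_on_interval) auto
  moreover have "w powr (1/p) * ?m \<le> ((x0 + w) - (x0 - w)) powr (1/p) * ?m"
    using w p M by (intro mult_right_mono powr_mono2) auto
  ultimately show ?thesis by linarith
qed

lemma isCont_norm_ge_half:
  fixes f :: "real \<Rightarrow> 'a::real_normed_vector"
  assumes "isCont f a" "0 < norm (f a)"
  shows "\<exists>d>0. \<forall>x. \<bar>x - a\<bar> < d \<longrightarrow> norm (f a) / 2 \<le> norm (f x)"
proof -
  have "((\<lambda>x. norm (f x)) \<longlongrightarrow> norm (f a)) (at a)"
    using assms(1) by (intro tendsto_norm) (simp add: isCont_def)
  moreover have "norm (f a) / 2 < norm (f a)" using assms(2) by simp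
  ultimately have "eventually (\<lambda>x. norm (f a) / 2 < norm (f x)) (at a)"
    by (rule order_tendstoD)
  then obtain d where "d > 0" "\<And>x. x \<noteq> a \<Longrightarrow> dist x a < d \<Longrightarrow> norm (f a) / 2 < norm (f x)"
    unfolding eventually_at by blast
  moreover have "norm (f a) / 2 \<le> norm (f a)" using assms(2) by simp
  ultimately show ?thesis by (metis dist_real_def less_imp_le)
qed

lemma Lp_norm_T_op_gaussian_le:
  assumes bounded: "\<And>f g. schwartz f \<Longrightarrow> schwartz g \<Longrightarrow> Lp_norm p (T_op chi f g) \<le> C * sup_norm f * Lp_norm p g"
    and p: "p \<ge> 1" and w: "w > 0"
  shows "Lp_norm p (T_op chi (test_fun N) (\<lambda>y. complex_of_real (gaussian x0 w y))) \<le> max C 0 * (3 * w powr (1/p))"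
proof -
  let ?g = "\<lambda>y. complex_of_real (gaussian x0 w y)"
  have "Lp_norm p (T_op chi (test_fun N) ?g) \<le> C * sup_norm (test_fun N) * Lp_norm p ?g"
    using w by (intro bounded schwartz_test_fun schwartz_gaussian)
  also have "\<dots> \<le> max C 0 * (3 * w powr (1/p))"
  proof (rule mult_mono)
    have "C * sup_norm (test_fun N) \<le> max C 0 * sup_norm (test_fun N)"
      using sup_norm_test_fun(1) by (intro mult_right_mono) auto
    also have "\<dots> \<le> max C 0" using sup_norm_test_fun(2) by (intro mult_left_le) auto
    finally show "C * sup_norm (test_fun N) \<le> max C 0" .
    show "Lp_norm p ?g \<le> 3 * w powr (1/p)" using w p by (rule Lp_norm_gaussian_le)
    show "0 \<le> Lp_norm p ?g" using p w by (simp add: Lp_norm_gaussian)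
  qed simp
  finally show ?thesis .
qed

theorem proposition5p3:
  fixes chi :: "real \<Rightarrow> real" and p :: real
  assumes "smooth_real chi"
    and "closure {x. chi x \<noteq> 0} \<subseteq> {-2<..<2}"
    and "\<forall>x\<in>{-1..1}. chi x = 1"
    and "\<forall>x. chi (- x) = chi x"
    and "1 < p"
  shows "\<not> (\<exists>C. \<forall>f g. schwartz f \<longrightarrow> schwartz g \<longrightarrow>
            Lp_norm p (T_op chi f g) \<le> C * sup_norm f * Lp_norm p g)"
proof
  assume "\<exists>C. \<forall>f g. schwartz f \<longrightarrow> schwartz g \<longrightarrow> Lp_norm p (T_op chi f g) \<le> C * sup_norm f * Lp_norm p g"
  then obtain C where C: "\<And>f g. schwartz f \<Longrightarrow> schwartz g \<Longrightarrow> Lp_norm p (T_op chi f g) \<le> C * sup_norm f * Lp_norm p g"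
    by blast
  obtain N where N: "12 * pi * max C 0 / exp (- 1/2) < norm (osc_integral N (-1))" (is "_ < ?M")
    using osc_integral_unbounded by blast
  moreover have "0 \<le> 12 * pi * max C 0 / exp (- 1/2)" by simp
  ultimately obtain d where d: "d > 0" "\<And>x. \<bar>x - (-1)\<bar> < d \<Longrightarrow> ?M / 2 \<le> norm (osc_integral N x)"
    using isCont_norm_ge_half[OF isCont_osc_integral] by (meson le_less_trans)
  define w where "w = min d 1 / 4"
  have w: "w > 0" "w \<le> 1/4" "3 * w < d" using d(1) by (auto simp: w_def)
  have "w powr (1/p) * (exp (- 1/2) * (?M / 2) / (2 * pi))
      \<le> Lp_norm p (T_op chi (test_fun N) (\<lambda>y. complex_of_real (gaussian (-1 + 2 * w) w y)))"
    using assms(1-3,5) w d(2) by (intro Lp_norm_T_op_gaussian_ge) auto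
  also have "\<dots> \<le> max C 0 * (3 * w powr (1/p))"
    using C assms(5) w(1) by (intro Lp_norm_T_op_gaussian_le) auto
  finally have "exp (- 1/2) * ?M / (4 * pi) \<le> 3 * max C 0"
    using w by (simp add: field_simps)
  then show False using N by (simp add: field_simps)
qed

end
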